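(* Let $X_1=X_2=X_3=[0,1]$, each $\mu_{ij}$ Lebesgue measure on $[0,1]^2$, and $c(x_1,x_2,x_3)=\max(0,x_1+x_2+3x_3-3)$. Define $f_{12}\equiv0$ on $[0,1]^2$, $f_{13}(x_1,x_3)=0$ if $x_3<\frac23$ and $f_{13}(x_1,x_3)=x_1+\frac32x_3-\frac32$ if $x_3\ge\frac23$, $f_{23}(x_2,x_3)=0$ if $x_3<\frac23$ and $f_{23}(x_2,x_3)=x_2+\frac32x_3-\frac32$ if $x_3\ge\frac23$. Then $f_{12}(x_1,x_2)+f_{13}(x_1,x_3)+f_{23}(x_2,x_3)\le c(x_1,x_2,x_3)$ on $[0,1]^3$, the tuple $\{f_{ij}\}$ maximizes $\sum_{i<j}\int f_{ij}\,d\mu_{ij}$ among all tuples of integrable functions satisfying this inequality (i.e. it solves the dual problem), and there exists a probability measure $\pi$ on $[0,1]^3$ with $\mathrm{Pr}_{ij}(\pi)=\mu_{ij}$ for all $i<j$, concentrated on $\{(x_1,x_2,x_3):x_1+x_2+3x_3\in\mathbb{Z}\}$, which minimizes $\int c\,d\pi$ among all such measures.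
   Context: $\mathrm{Pr}_{ij}$ is the projection of $[0,1]^3$ onto coordinates $(i,j)$. *)

theory Defs
  imports "HOL-Probability.Probability"
begin

definition unit_sq :: "(real \<times> real) set" where
  "unit_sq = {0..1} \<times> {0..1}"

definition unit_cube :: "(real \<times> real \<times> real) set" where
  "unit_cube = {0..1} \<times> {0..1} \<times> {0..1}"

text \<open>Lebesgue measure on [0,1]^2 as a Borel measure (used for marginals).\<close>
definition mu2 :: "(real \<times> real) measure" where
  "mu2 = restrict_space lborel unit_sq"

text \<open>Lebesgue measure on [0,1]^2 on Lebesgue-measurable sets (integrability class for the dual).\<close>
definition mu2L :: "(real \<times> real) measure" where
  "mu2L = lebesgue_on unit_sq"

definition cost :: "real \<times> real \<times> real \<Rightarrow> real" where
  "cost p = (case p of (x1, x2, x3) \<Rightarrow> max 0 (x1 + x2 + 3 * x3 - 3))"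

definition pr12 :: "real \<times> real \<times> real \<Rightarrow> real \<times> real" where
  "pr12 p = (case p of (x1, x2, x3) \<Rightarrow> (x1, x2))"
definition pr13 :: "real \<times> real \<times> real \<Rightarrow> real \<times> real" where
  "pr13 p = (case p of (x1, x2, x3) \<Rightarrow> (x1, x3))"
definition pr23 :: "real \<times> real \<times> real \<Rightarrow> real \<times> real" where
  "pr23 p = (case p of (x1, x2, x3) \<Rightarrow> (x2, x3))"

definition coupling :: "(real \<times> real \<times> real) measure \<Rightarrow> bool" where
  "coupling \<pi> \<longleftrightarrow> prob_space \<pi> \<and> sets \<pi> = sets (restrict_space borel unit_cube)
     \<and> distr \<pi> mu2 pr12 = mu2 \<and> distr \<pi> mu2 pr13 = mu2 \<and> distr \<pi> mu2 pr23 = mu2"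

definition f12 :: "real \<Rightarrow> real \<Rightarrow> real" where
  "f12 x1 x2 = 0"
definition f13 :: "real \<Rightarrow> real \<Rightarrow> real" where
  "f13 x1 x3 = (if x3 < 2/3 then 0 else x1 + 3/2 * x3 - 3/2)"
definition f23 :: "real \<Rightarrow> real \<Rightarrow> real" where
  "f23 x2 x3 = (if x3 < 2/3 then 0 else x2 + 3/2 * x3 - 3/2)"

end

theory Submission
  imports Defs
begin

text \<open>Draw (x1, x2) uniformly from the square, let r \<in> [0,1] complete x1 + x2 to an integer,
  and put x3 = (k + r)/3 with k uniform in {0, 1, 2}. This plan lives on x1 + x2 + 3 x3 \<in> \<int>.
  Its (1,2)-marginal is Lebesgue by construction. For fixed x1 the map x2 \<mapsto> r is a piecewise
  reflection of [0,1], hence measure preserving, and averaging (k + r)/3 over k spreads a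
  uniform r uniformly over [0,1]; so the (1,3)- and (2,3)-marginals are Lebesgue too.
  On the support f12 + f13 + f23 = c away from the null line x1 = x2 = 0, since x3 < 2/3 forces
  x1 + x2 + 3 x3 \<le> 3 and x3 \<ge> 2/3 forces x1 + x2 + 3 x3 \<ge> 3. Weak duality, i.e.
  \<Sum> \<integral> g_ij d\<mu>_ij = \<integral> \<Sum> g_ij \<circ> Pr_ij d\<pi>' \<le> \<integral> c d\<pi>' for every coupling \<pi>' and every
  feasible (g_ij), then shows that both the plan and the f_ij are optimal.\<close>

lemma borel_measurable_fst_snd [measurable]:
  "(fst :: 'a::topological_space \<times> 'b::topological_space \<Rightarrow> 'a) \<in> borel \<rightarrow>\<^sub>M borel"
  "(snd :: 'a::topological_space \<times> 'b::topological_space \<Rightarrow> 'b) \<in> borel \<rightarrow>\<^sub>M borel"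
  by (intro borel_measurable_continuous_onI continuous_intros)+

lemma Ints_borel [measurable]: "(\<int> :: real set) \<in> sets borel"
  by (rule sets.countable) (auto simp: countable_int)

lemma prob_space_uniform_lessThan: "0 < (n::nat) \<Longrightarrow> prob_space (uniform_count_measure {..<n})"
  by (rule prob_space_uniform_count_measure) (auto simp: lessThan_empty_iff)

lemma
  fixes F :: "real \<times> real \<Rightarrow> ennreal"
  assumes "F \<in> borel_measurable borel"
  shows nn_integral_lborel_prod_fst: "(\<integral>\<^sup>+q. F q \<partial>lborel) = (\<integral>\<^sup>+x. \<integral>\<^sup>+y. F (x, y) \<partial>lborel \<partial>lborel)"
    and nn_integral_lborel_prod_snd: "(\<integral>\<^sup>+q. F q \<partial>lborel) = (\<integral>\<^sup>+y. \<integral>\<^sup>+x. F (x, y) \<partial>lborel \<partial>lborel)"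
  using lborel.nn_integral_fst[of F lborel] lborel_pair.nn_integral_snd[of F] assms
  by (simp_all add: lborel_prod)

lemma integrable_lebesgue_on_borel:
  fixes S :: "'a::euclidean_space set" and f :: "'a \<Rightarrow> real"
  assumes [measurable]: "S \<in> sets borel" "f \<in> borel_measurable borel"
    and "integrable (restrict_space lborel S) f"
  shows "integrable (lebesgue_on S) f"
proof -
  have "(\<lambda>x. indicator S x *\<^sub>R f x) \<in> borel_measurable lborel" by measurable
  moreover have "integrable lborel (\<lambda>x. indicator S x *\<^sub>R f x)"
    using assms(3) by (simp add: integrable_restrict_space)
  ultimately show ?thesis
    by (simp add: integrable_restrict_space integrable_completion)
qed

lemma lebesgue_on_integrable_borel_representative:
  fixes S :: "'a::euclidean_space set" and g :: "'a \<Rightarrow> real"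
  assumes S [measurable]: "S \<in> sets borel" and g: "integrable (lebesgue_on S) g"
  obtains h where "h \<in> borel_measurable borel" "integrable (restrict_space lborel S) h"
    "AE x in restrict_space lborel S. g x = h x"
    "integral\<^sup>L (lebesgue_on S) g = integral\<^sup>L (restrict_space lborel S) h"
proof -
  have S_lborel: "S \<inter> space lborel \<in> sets lborel" and S_lebesgue: "S \<inter> space lebesgue \<in> sets lebesgue"
    by auto
  define G where "G x = indicator S x *\<^sub>R g x" for x
  have G: "integrable lebesgue G"
    using g unfolding integrable_restrict_space[OF S_lebesgue] G_def .
  then have "G \<in> borel_measurable (completion lborel)" by (rule borel_measurable_integrable)
  then obtain h0 where h0: "h0 \<in> borel_measurable lborel" "AE x in lborel. G x = h0 x"
    using completion_ex_borel_measurable_real by blast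
  define h where "h x = indicator S x *\<^sub>R h0 x" for x
  have [measurable]: "h0 \<in> borel_measurable borel"
    using h0(1) by (simp add: measurable_cong_sets[OF sets_lborel refl])
  have h_borel [measurable]: "h \<in> borel_measurable borel" unfolding h_def by measurable
  have h_lborel: "h \<in> borel_measurable lborel" by simp
  have G_eq_h: "AE x in lborel. G x = h x"
    using h0(2) by eventually_elim (auto simp: G_def h_def indicator_def)
  then have G_eq_h': "AE x in lebesgue. G x = h x" by (rule AE_completion)
  have "integrable lebesgue h"
    by (rule integrable_cong_AE_imp[OF G measurable_completion[OF h_lborel] G_eq_h'])
  then have "integrable lborel h" using integrable_completion[OF h_lborel] by simp
  moreover have h_restrict: "(\<lambda>x. indicator S x *\<^sub>R h x) = h" by (auto simp: h_def indicator_def)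
  ultimately have "integrable (restrict_space lborel S) h"
    unfolding integrable_restrict_space[OF S_lborel] by simp
  moreover have "AE x in restrict_space lborel S. g x = h x"
    unfolding AE_restrict_space_iff[OF S_lborel]
    using G_eq_h by eventually_elim (auto simp: G_def)
  moreover have "integral\<^sup>L (lebesgue_on S) g = integral\<^sup>L (restrict_space lborel S) h"
  proof -
    have "integral\<^sup>L (lebesgue_on S) g = integral\<^sup>L lebesgue G"
      unfolding integral_restrict_space[OF S_lebesgue] G_def ..
    also have "\<dots> = integral\<^sup>L lebesgue h"
      using G h_lborel G_eq_h'
      by (intro integral_cong_AE) (auto intro: measurable_completion borel_measurable_integrable)
    also have "\<dots> = integral\<^sup>L lborel h" by (rule integral_completion[OF h_lborel])
    finally show ?thesis
      unfolding integral_restrict_space[OF S_lborel] h_restrict .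
  qed
  ultimately show ?thesis using h_borel that by blast
qed

lemma integral_distr_marginal:
  assumes pr: "pr \<in> M \<rightarrow>\<^sub>M N" and marginal: "distr M N pr = N"
    and h: "h \<in> borel_measurable N" "integrable N (h :: _ \<Rightarrow> real)"
  shows "integrable M (\<lambda>x. h (pr x))" "(\<integral>x. h (pr x) \<partial>M) = (\<integral>y. h y \<partial>N)"
  using integrable_distr_eq[OF pr h(1)] integral_distr[OF pr h(1)] h(2) by (simp_all add: marginal)

section \<open>Couplings and weak duality\<close>

lemma unit_sq_borel [measurable]: "unit_sq \<in> sets borel"
  and unit_cube_borel [measurable]: "unit_cube \<in> sets borel"
  unfolding unit_sq_def unit_cube_def by (simp_all add: borel_prod[symmetric])

lemma sets_mu2 [measurable_cong]: "sets mu2 = sets (restrict_space borel unit_sq)"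
  unfolding mu2_def by (simp add: sets_restrict_space)

lemma space_mu2: "space mu2 = unit_sq"
  unfolding mu2_def by (simp add: space_restrict_space)

lemma prob_space_mu2: "prob_space mu2"
proof
  have "emeasure (lborel \<Otimes>\<^sub>M lborel) ({0..1::real} \<times> {0..1::real}) = 1"
    by (simp add: lborel.emeasure_pair_measure_Times)
  then have "emeasure lborel unit_sq = 1"
    by (simp add: lborel_prod unit_sq_def)
  then show "emeasure mu2 (space mu2) = 1"
    by (simp add: space_mu2 mu2_def emeasure_restrict_space)
qed

lemma nn_integral_mu2:
  "H \<in> borel_measurable borel \<Longrightarrow> (\<integral>\<^sup>+q. H q \<partial>mu2) = (\<integral>\<^sup>+q. H q * indicator unit_sq q \<partial>lborel)"
  unfolding mu2_def by (simp add: nn_integral_restrict_space)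

lemma borel_measurable_pr [measurable]:
  "pr12 \<in> borel \<rightarrow>\<^sub>M borel" "pr13 \<in> borel \<rightarrow>\<^sub>M borel" "pr23 \<in> borel \<rightarrow>\<^sub>M borel"
  unfolding pr12_def pr13_def pr23_def by measurable

lemma pr_apply:
  "pr12 p = (fst p, fst (snd p))" "pr13 p = (fst p, snd (snd p))" "pr23 p = (fst (snd p), snd (snd p))"
  by (simp_all add: pr12_def pr13_def pr23_def split: prod.splits)

lemma borel_measurable_cost [measurable]: "cost \<in> borel_measurable borel"
  unfolding cost_def by measurable

lemma measurable_pr_cube:
  assumes "sets \<nu> = sets (restrict_space borel unit_cube)"
  shows "pr12 \<in> \<nu> \<rightarrow>\<^sub>M mu2" "pr13 \<in> \<nu> \<rightarrow>\<^sub>M mu2" "pr23 \<in> \<nu> \<rightarrow>\<^sub>M mu2"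
  unfolding measurable_cong_sets[OF assms sets_mu2]
  by (intro measurable_restrict_space2 measurable_restrict_space1 borel_measurable_pr;
      force simp: space_restrict_space unit_cube_def unit_sq_def pr12_def pr13_def pr23_def)+

lemma coupling_space: "coupling \<nu> \<Longrightarrow> space \<nu> = unit_cube"
  unfolding coupling_def by (metis sets_eq_imp_space_eq space_restrict_space inf_top.right_neutral space_borel)

lemma coupling_integrable_cost:
  assumes "coupling \<nu>" shows "integrable \<nu> cost"
proof -
  interpret prob_space \<nu> using assms by (simp add: coupling_def)
  have sets: "sets \<nu> = sets (restrict_space borel unit_cube)"
    using assms by (simp add: coupling_def)
  have "cost \<in> borel_measurable \<nu>"
    unfolding measurable_cong_sets[OF sets refl] by (intro measurable_restrict_space1) measurable
  moreover have "AE p in \<nu>. norm (cost p) \<le> 3"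
    by (intro AE_I2) (auto simp: coupling_space[OF assms] unit_cube_def cost_def)
  ultimately show ?thesis
    by (intro integrable_const_bound)
qed

text \<open>A Lebesgue-integrable g need not make g \<circ> pr measurable for \<nu>, so we pass to a Borel
  version of g; it agrees with g \<nu>-a.e. along pr because the marginal is mu2.\<close>

lemma coupling_marginal_representative:
  fixes g :: "real \<times> real \<Rightarrow> real"
  assumes pr: "sets \<nu> = sets (restrict_space borel unit_cube)" "pr \<in> \<nu> \<rightarrow>\<^sub>M mu2"
    and marginal: "distr \<nu> mu2 pr = mu2" and g: "integrable mu2L g"
  obtains h where "integrable \<nu> (\<lambda>p. h (pr p))" "AE p in \<nu>. g (pr p) = h (pr p)"
    "(\<integral>p. h (pr p) \<partial>\<nu>) = integral\<^sup>L mu2L g"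
proof -
  obtain h where h [measurable]: "h \<in> borel_measurable borel" and h_int: "integrable mu2 h"
    and g_eq_h: "AE q in mu2. g q = h q" and integral_eq: "integral\<^sup>L mu2L g = integral\<^sup>L mu2 h"
    by (rule lebesgue_on_integrable_borel_representative[OF unit_sq_borel g[unfolded mu2L_def],
        folded mu2_def mu2L_def])
  have "h \<in> borel_measurable mu2"
    unfolding mu2_def by (simp add: measurable_restrict_space1)
  note marginal_h = integral_distr_marginal[OF pr(2) marginal this h_int]
  have "AE p in \<nu>. g (pr p) = h (pr p)"
    by (rule AE_distrD[OF pr(2)]) (subst marginal, fact)
  with marginal_h show ?thesis
    using that integral_eq by simp
qed

lemma coupling_dual_objective:
  fixes g12 g13 g23 :: "real \<Rightarrow> real \<Rightarrow> real"
  assumes "coupling \<nu>" and "integrable mu2L (\<lambda>(x, y). g12 x y)"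
    "integrable mu2L (\<lambda>(x, y). g13 x y)" "integrable mu2L (\<lambda>(x, y). g23 x y)"
  obtains H where "integrable \<nu> H"
    "AE p in \<nu>. H p = g12 (fst p) (fst (snd p)) + g13 (fst p) (snd (snd p)) + g23 (fst (snd p)) (snd (snd p))"
    "(\<integral>p. H p \<partial>\<nu>) = (\<integral>p. g12 (fst p) (snd p) \<partial>mu2L) + (\<integral>p. g13 (fst p) (snd p) \<partial>mu2L)
       + (\<integral>p. g23 (fst p) (snd p) \<partial>mu2L)"
proof -
  have sets: "sets \<nu> = sets (restrict_space borel unit_cube)"
    and marginals: "distr \<nu> mu2 pr12 = mu2" "distr \<nu> mu2 pr13 = mu2" "distr \<nu> mu2 pr23 = mu2"
    using assms(1) by (auto simp: coupling_def)
  obtain h12 where h12: "integrable \<nu> (\<lambda>p. h12 (pr12 p))"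
      "AE p in \<nu>. (\<lambda>(x, y). g12 x y) (pr12 p) = h12 (pr12 p)"
      "(\<integral>p. h12 (pr12 p) \<partial>\<nu>) = (\<integral>p. g12 (fst p) (snd p) \<partial>mu2L)"
    using coupling_marginal_representative[OF sets measurable_pr_cube(1)[OF sets] marginals(1) assms(2)]
    unfolding case_prod_beta' by blast
  obtain h13 where h13: "integrable \<nu> (\<lambda>p. h13 (pr13 p))"
      "AE p in \<nu>. (\<lambda>(x, y). g13 x y) (pr13 p) = h13 (pr13 p)"
      "(\<integral>p. h13 (pr13 p) \<partial>\<nu>) = (\<integral>p. g13 (fst p) (snd p) \<partial>mu2L)"
    using coupling_marginal_representative[OF sets measurable_pr_cube(2)[OF sets] marginals(2) assms(3)]
    unfolding case_prod_beta' by blast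
  obtain h23 where h23: "integrable \<nu> (\<lambda>p. h23 (pr23 p))"
      "AE p in \<nu>. (\<lambda>(x, y). g23 x y) (pr23 p) = h23 (pr23 p)"
      "(\<integral>p. h23 (pr23 p) \<partial>\<nu>) = (\<integral>p. g23 (fst p) (snd p) \<partial>mu2L)"
    using coupling_marginal_representative[OF sets measurable_pr_cube(3)[OF sets] marginals(3) assms(4)]
    unfolding case_prod_beta' by blast
  show ?thesis
  proof
    show "integrable \<nu> (\<lambda>p. h12 (pr12 p) + h13 (pr13 p) + h23 (pr23 p))"
      using h12 h13 h23 by simp
    show "AE p in \<nu>. h12 (pr12 p) + h13 (pr13 p) + h23 (pr23 p) =
        g12 (fst p) (fst (snd p)) + g13 (fst p) (snd (snd p)) + g23 (fst (snd p)) (snd (snd p))"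
      using h12(2) h13(2) h23(2) by eventually_elim (simp add: pr_apply case_prod_beta)
    show "(\<integral>p. h12 (pr12 p) + h13 (pr13 p) + h23 (pr23 p) \<partial>\<nu>) = (\<integral>p. g12 (fst p) (snd p) \<partial>mu2L)
        + (\<integral>p. g13 (fst p) (snd p) \<partial>mu2L) + (\<integral>p. g23 (fst p) (snd p) \<partial>mu2L)"
      using h12(1,3) h13(1,3) h23(1,3) by simp
  qed
qed

lemma weak_duality:
  fixes g12 g13 g23 :: "real \<Rightarrow> real \<Rightarrow> real"
  assumes "coupling \<nu>" and "integrable mu2L (\<lambda>(x, y). g12 x y)"
    "integrable mu2L (\<lambda>(x, y). g13 x y)" "integrable mu2L (\<lambda>(x, y). g23 x y)"
    and feasible: "\<forall>x1\<in>{0..1}. \<forall>x2\<in>{0..1}. \<forall>x3\<in>{0..1}.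
      g12 x1 x2 + g13 x1 x3 + g23 x2 x3 \<le> cost (x1, x2, x3)"
  shows "(\<integral>p. g12 (fst p) (snd p) \<partial>mu2L) + (\<integral>p. g13 (fst p) (snd p) \<partial>mu2L)
      + (\<integral>p. g23 (fst p) (snd p) \<partial>mu2L) \<le> (\<integral>p. cost p \<partial>\<nu>)"
proof -
  obtain H where H: "integrable \<nu> H"
    "AE p in \<nu>. H p = g12 (fst p) (fst (snd p)) + g13 (fst p) (snd (snd p)) + g23 (fst (snd p)) (snd (snd p))"
    "(\<integral>p. H p \<partial>\<nu>) = (\<integral>p. g12 (fst p) (snd p) \<partial>mu2L) + (\<integral>p. g13 (fst p) (snd p) \<partial>mu2L)
       + (\<integral>p. g23 (fst p) (snd p) \<partial>mu2L)"
    using coupling_dual_objective[OF assms(1-4)] by blast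
  have "AE p in \<nu>. H p \<le> cost p"
    using H(2) AE_space
  proof eventually_elim
    case (elim p)
    then show ?case
      using feasible by (cases p) (auto simp: coupling_space[OF assms(1)] unit_cube_def)
  qed
  then have "(\<integral>p. H p \<partial>\<nu>) \<le> (\<integral>p. cost p \<partial>\<nu>)"
    by (intro integral_mono_AE H(1) coupling_integrable_cost[OF assms(1)])
  then show ?thesis unfolding H(3) .
qed

section \<open>A measure-preserving fold of the unit interval\<close>

text \<open>For a, b \<in> [0,1], the point of [0,1] that completes a + b to an integer.\<close>

definition int_gap :: "real \<Rightarrow> real \<Rightarrow> real" where
  "int_gap a b = (if a + b < 1 then 1 - a - b else 2 - a - b)"

lemma int_gap_commute: "int_gap a b = int_gap b a"
  unfolding int_gap_def by (simp add: add.commute)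

lemma int_gap_bounds: "a \<in> {0..1} \<Longrightarrow> b \<in> {0..1} \<Longrightarrow> int_gap a b \<in> {0..1}"
  unfolding int_gap_def by auto

lemma add_int_gap: "a + b + int_gap a b = (if a + b < 1 then 1 else 2)"
  unfolding int_gap_def by simp

lemma borel_measurable_int_gap [measurable]:
  "(\<lambda>x. int_gap (f x) (g x)) \<in> borel_measurable M"
  if [measurable]: "f \<in> borel_measurable M" "g \<in> borel_measurable M"
  unfolding int_gap_def by measurable

lemma nn_integral_int_gap:
  fixes F :: "real \<Rightarrow> ennreal"
  assumes a: "a \<in> {0..1}" and [measurable]: "F \<in> borel_measurable borel"
  shows "(\<integral>\<^sup>+b. indicator {0..1} b * F (int_gap a b) \<partial>lborel) = (\<integral>\<^sup>+x. indicator {0..1} x * F x \<partial>lborel)"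
proof -
  have split: "indicator {0..1} b * F (int_gap a b) =
      indicator {0..<1-a} b * F (1-a-b) + indicator {1-a..1} b * F (2-a-b)" for b
    using a by (auto simp: indicator_def int_gap_def)
  have lower: "(\<integral>\<^sup>+b. indicator {0..<1-a} b * F (1-a-b) \<partial>lborel) = (\<integral>\<^sup>+x. indicator {0<..1-a} x * F x \<partial>lborel)"
    using nn_integral_real_affine[of "\<lambda>x. indicator {0<..1-a} x * F x" "-1" "1-a"]
    by (auto simp: indicator_def intro!: nn_integral_cong)
  have upper: "(\<integral>\<^sup>+b. indicator {1-a..1} b * F (2-a-b) \<partial>lborel) = (\<integral>\<^sup>+x. indicator {1-a..1} x * F x \<partial>lborel)"
    using nn_integral_real_affine[of "\<lambda>x. indicator {1-a..1} x * F x" "-1" "2-a"]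
    by (auto simp: indicator_def intro!: nn_integral_cong)
  have "(\<integral>\<^sup>+b. indicator {0..1} b * F (int_gap a b) \<partial>lborel) =
      (\<integral>\<^sup>+x. indicator {0<..1-a} x * F x + indicator {1-a..1} x * F x \<partial>lborel)"
    unfolding split by (simp add: nn_integral_add lower upper)
  also have "\<dots> = (\<integral>\<^sup>+x. indicator {0..1} x * F x \<partial>lborel)"
  proof (intro nn_integral_cong_AE)
    show "AE x in lborel. indicator {0<..1-a} x * F x + indicator {1-a..1} x * F x = indicator {0..1} x * F x"
      using AE_lborel_singleton[of 0] AE_lborel_singleton[of "1-a"]
      by eventually_elim (use a in \<open>auto simp: indicator_def\<close>)
  qed
  finally show ?thesis .
qed

lemma sum_of_bool_eq_int:
  "(\<Sum>k<n. of_bool (m = int k) :: ennreal) = of_bool (0 \<le> m \<and> m < int n)"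
proof -
  have "(\<Sum>k<n. of_bool (m = int k) :: ennreal) = (\<Sum>k<n. if k = nat m then of_bool (0 \<le> m) else 0)"
    by (intro sum.cong refl) auto
  then show ?thesis by (auto simp: nat_less_iff)
qed

lemma sum_indicator_subintervals:
  fixes y :: real
  assumes n: "0 < n"
  shows "(\<Sum>k<n. indicator {k/n..<(real k + 1)/n} y) = (indicator {0..<1} y :: ennreal)"
proof -
  have "y \<in> {k/n..<(real k + 1)/n} \<longleftrightarrow> \<lfloor>y * n\<rfloor> = int k" for k
    using n by (simp add: floor_eq_iff field_simps)
  then have "(\<Sum>k<n. indicator {k/n..<(real k + 1)/n} y) = (\<Sum>k<n. of_bool (\<lfloor>y * n\<rfloor> = int k) :: ennreal)"
    by (simp only: indicator_def)
  also have "\<dots> = of_bool (0 \<le> \<lfloor>y * n\<rfloor> \<and> \<lfloor>y * n\<rfloor> < n)"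
    by (rule sum_of_bool_eq_int)
  also have "\<dots> = indicator {0..<1} y"
    using n by (simp add: floor_less_iff zero_le_mult_iff indicator_def)
  finally show ?thesis .
qed

lemma nn_integral_subdivide_unit_interval:
  fixes G :: "real \<Rightarrow> ennreal"
  assumes [measurable]: "G \<in> borel_measurable borel" and n: "0 < n"
  shows "(\<Sum>k<n. \<integral>\<^sup>+x. indicator {0..1} x * G ((real k + x) / n) \<partial>lborel)
    = of_nat n * (\<integral>\<^sup>+y. indicator {0..1} y * G y \<partial>lborel)"
proof -
  have Icc_Ico: "(\<integral>\<^sup>+x. indicator {0..1} x * F x \<partial>lborel) = (\<integral>\<^sup>+x. indicator {0..<1} x * F x \<partial>lborel)"
    for F :: "real \<Rightarrow> ennreal"
    using AE_lborel_singleton[of 1]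
    by (intro nn_integral_cong_AE) (auto simp: indicator_def elim!: eventually_mono)
  have piece: "(\<integral>\<^sup>+x. indicator {0..<1} x * G ((real k + x) / n) \<partial>lborel)
      = of_nat n * (\<integral>\<^sup>+y. indicator {k/n..<(real k + 1)/n} y * G y \<partial>lborel)" for k
  proof -
    have "k/n + 1/n * x \<in> {k/n..<(real k + 1)/n} \<longleftrightarrow> x \<in> {0..<1}" for x :: real
      using n by (auto simp: field_simps)
    then have shift: "(\<lambda>x. indicator {k/n..<(real k + 1)/n} (k/n + 1/n * x) * G (k/n + 1/n * x))
        = (\<lambda>x. indicator {0..<1} x * G ((real k + x) / n))"
      by (simp only: indicator_def) (simp add: add_divide_distrib)
    have "(\<integral>\<^sup>+y. indicator {k/n..<(real k + 1)/n} y * G y \<partial>lborel)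
        = ennreal (1/n) * (\<integral>\<^sup>+x. indicator {0..<1} x * G ((real k + x) / n) \<partial>lborel)"
      using nn_integral_real_affine[of "\<lambda>y. indicator {k/n..<(real k + 1)/n} y * G y" "1/n" "k/n"] n
      unfolding shift by simp
    moreover have "of_nat n * ennreal (1/n) = 1"
      using n by (simp add: ennreal_of_nat_eq_real_of_nat flip: ennreal_mult)
    ultimately show ?thesis
      by (simp add: mult.assoc[symmetric])
  qed
  have "(\<Sum>k<n. \<integral>\<^sup>+x. indicator {0..1} x * G ((real k + x) / n) \<partial>lborel)
      = of_nat n * (\<integral>\<^sup>+y. (\<Sum>k<n. indicator {k/n..<(real k + 1)/n} y * G y) \<partial>lborel)"
    unfolding Icc_Ico piece sum_distrib_left[symmetric] by (subst nn_integral_sum) auto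
  also have "\<dots> = of_nat n * (\<integral>\<^sup>+y. indicator {0..1} y * G y \<partial>lborel)"
    unfolding Icc_Ico sum_distrib_right[symmetric] sum_indicator_subintervals[OF n] ..
  finally show ?thesis .
qed

lemma nn_integral_int_gap_thirds:
  fixes G :: "real \<Rightarrow> ennreal"
  assumes [measurable]: "G \<in> borel_measurable borel"
  shows "(\<integral>\<^sup>+b. (\<Sum>k<3. ennreal (1/3) * G ((real k + int_gap a b) / 3)) * indicator unit_sq (a, b) \<partial>lborel)
    = (\<integral>\<^sup>+y. G y * indicator unit_sq (a, y) \<partial>lborel)"
proof (cases "a \<in> {0..1}")
  case False
  then have "indicator unit_sq (a, y) = (0 :: ennreal)" for y
    by (auto simp: unit_sq_def indicator_def)
  then show ?thesis by simp
next
  case a: True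
  have "(\<Sum>k<3. ennreal (1/3) * G ((real k + int_gap a b) / 3)) * indicator unit_sq (a, b)
      = ennreal (1/3) * (\<Sum>k<3. indicator {0..1} b * G ((real k + int_gap a b) / 3))" for b
    using a by (simp add: unit_sq_def indicator_def sum_distrib_left)
  then have "(\<integral>\<^sup>+b. (\<Sum>k<3. ennreal (1/3) * G ((real k + int_gap a b) / 3)) * indicator unit_sq (a, b) \<partial>lborel)
      = ennreal (1/3) * (\<integral>\<^sup>+b. (\<Sum>k<3. indicator {0..1} b * G ((real k + int_gap a b) / 3)) \<partial>lborel)"
    by (simp only:) (rule nn_integral_cmult, measurable)
  also have "\<dots> = ennreal (1/3) * (\<Sum>k<3. \<integral>\<^sup>+b. indicator {0..1} b * G ((real k + int_gap a b) / 3) \<partial>lborel)"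
    by (intro arg_cong[where f="(*) _"] nn_integral_sum) measurable
  also have "\<dots> = ennreal (1/3) * (\<Sum>k<3. \<integral>\<^sup>+x. indicator {0..1} x * G ((real k + x) / 3) \<partial>lborel)"
    using a by (intro arg_cong[where f="(*) _"] sum.cong refl nn_integral_int_gap) auto
  also have "\<dots> = (\<integral>\<^sup>+y. indicator {0..1} y * G y \<partial>lborel)"
  proof -
    have "ennreal (1/3) * 3 = 1"
      by (simp flip: ennreal_numeral ennreal_mult)
    then show ?thesis
      using nn_integral_subdivide_unit_interval[of G 3] by (simp add: mult.assoc[symmetric])
  qed
  also have "\<dots> = (\<integral>\<^sup>+y. G y * indicator unit_sq (a, y) \<partial>lborel)"
    using a by (intro nn_integral_cong) (simp add: unit_sq_def indicator_def)
  finally show ?thesis .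
qed

text \<open>Over each (x1, x2) the plan puts mass 1/3 on each of the three points
  x3 = (k + int_gap x1 x2)/3, k < 3, which are exactly the x3 \<in> [0,1] with x1 + x2 + 3 x3 \<in> \<int>.\<close>

definition lift :: "(real \<times> real) \<times> nat \<Rightarrow> real \<times> real \<times> real" where
  "lift q = (fst (fst q), snd (fst q), (real (snd q) + int_gap (fst (fst q)) (snd (fst q))) / 3)"

definition plan :: "(real \<times> real \<times> real) measure" where
  "plan = distr (mu2 \<Otimes>\<^sub>M uniform_count_measure {..<3}) (restrict_space borel unit_cube) lift"

lemma lift_in_unit_cube: "q \<in> unit_sq \<Longrightarrow> k < 3 \<Longrightarrow> lift (q, k) \<in> unit_cube"
  using int_gap_bounds[of "fst q" "snd q"] by (auto simp: lift_def unit_sq_def unit_cube_def)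

lemma measurable_lift: "lift \<in> mu2 \<Otimes>\<^sub>M uniform_count_measure {..<3} \<rightarrow>\<^sub>M restrict_space borel unit_cube"
proof (rule measurable_restrict_space2)
  show "lift \<in> space (mu2 \<Otimes>\<^sub>M uniform_count_measure {..<3}) \<rightarrow> unit_cube"
    by (auto simp: space_pair_measure space_mu2 space_uniform_count_measure lift_in_unit_cube)
  have "fst \<in> mu2 \<rightarrow>\<^sub>M borel" "snd \<in> mu2 \<rightarrow>\<^sub>M borel" "real \<in> uniform_count_measure {..<3} \<rightarrow>\<^sub>M borel"
    by (simp_all add: mu2_def measurable_restrict_space1
        measurable_cong_sets[OF sets_uniform_count_measure_count_space refl])
  then have [measurable]: "(\<lambda>q. fst (fst q)) \<in> borel_measurable (mu2 \<Otimes>\<^sub>M uniform_count_measure {..<3::nat})"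
    "(\<lambda>q. snd (fst q)) \<in> borel_measurable (mu2 \<Otimes>\<^sub>M uniform_count_measure {..<3::nat})"
    "(\<lambda>q. real (snd q)) \<in> borel_measurable (mu2 \<Otimes>\<^sub>M uniform_count_measure {..<3})"
    by (auto intro: measurable_compose[OF measurable_fst] measurable_compose[OF measurable_snd])
  show "lift \<in> borel_measurable (mu2 \<Otimes>\<^sub>M uniform_count_measure {..<3})"
    unfolding lift_def by measurable
qed

lemma prob_space_plan: "prob_space plan"
proof -
  interpret mu2: prob_space mu2 by (rule prob_space_mu2)
  interpret U: prob_space "uniform_count_measure {..<3::nat}"
    by (simp add: prob_space_uniform_lessThan)
  interpret pair_prob_space mu2 "uniform_count_measure {..<3::nat}" ..
  show ?thesis
    unfolding plan_def by (intro prob_space_distr measurable_lift)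
qed

lemma sets_plan [measurable_cong]: "sets plan = sets (restrict_space borel unit_cube)"
  unfolding plan_def by simp

lemma space_plan: "space plan = unit_cube"
  unfolding plan_def by (simp add: space_restrict_space)

lemma nn_integral_plan:
  fixes H :: "real \<times> real \<times> real \<Rightarrow> ennreal"
  assumes [measurable]: "H \<in> borel_measurable borel"
  shows "(\<integral>\<^sup>+p. H p \<partial>plan) = (\<integral>\<^sup>+q. (\<Sum>k<3. ennreal (1/3) *
      H (fst q, snd q, (real k + int_gap (fst q) (snd q)) / 3)) * indicator unit_sq q \<partial>lborel)"
proof -
  interpret U: prob_space "uniform_count_measure {..<3::nat}"
    by (simp add: prob_space_uniform_lessThan)
  have H_cube: "H \<in> borel_measurable (restrict_space borel unit_cube)"
    by (simp add: measurable_restrict_space1)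
  have "(\<integral>\<^sup>+p. H p \<partial>plan) = (\<integral>\<^sup>+q. H (lift q) \<partial>(mu2 \<Otimes>\<^sub>M uniform_count_measure {..<3}))"
    unfolding plan_def using H_cube by (intro nn_integral_distr measurable_lift) simp
  also have "\<dots> = (\<integral>\<^sup>+q. \<integral>\<^sup>+k. H (lift (q, k)) \<partial>uniform_count_measure {..<3} \<partial>mu2)"
    using measurable_comp[OF measurable_lift H_cube]
    by (intro U.nn_integral_fst[symmetric]) (simp add: comp_def)
  also have "\<dots> = (\<integral>\<^sup>+q. (\<Sum>k<3. ennreal (1/3) * H (fst q, snd q, (real k + int_gap (fst q) (snd q)) / 3)) \<partial>mu2)"
    by (intro nn_integral_cong)
      (simp add: uniform_count_measure_def nn_integral_point_measure_finite lift_def)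
  also have "\<dots> = (\<integral>\<^sup>+q. (\<Sum>k<3. ennreal (1/3) *
      H (fst q, snd q, (real k + int_gap (fst q) (snd q)) / 3)) * indicator unit_sq q \<partial>lborel)"
    by (rule nn_integral_mu2) measurable
  finally show ?thesis .
qed

lemma nn_integral_plan_pr13:
  fixes H :: "real \<times> real \<Rightarrow> ennreal"
  assumes [measurable]: "H \<in> borel_measurable borel"
  shows "(\<integral>\<^sup>+p. H (pr13 p) \<partial>plan) = (\<integral>\<^sup>+q. H q \<partial>mu2)"
proof -
  have "(\<integral>\<^sup>+p. H (pr13 p) \<partial>plan) = (\<integral>\<^sup>+a. \<integral>\<^sup>+b. (\<Sum>k<3. ennreal (1/3) *
      H (a, (real k + int_gap a b) / 3)) * indicator unit_sq (a, b) \<partial>lborel \<partial>lborel)"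
    by (simp add: nn_integral_plan pr_apply nn_integral_lborel_prod_fst)
  also have "\<dots> = (\<integral>\<^sup>+a. \<integral>\<^sup>+y. H (a, y) * indicator unit_sq (a, y) \<partial>lborel \<partial>lborel)"
    by (intro nn_integral_cong nn_integral_int_gap_thirds) measurable
  also have "\<dots> = (\<integral>\<^sup>+q. H q \<partial>mu2)"
    by (simp add: nn_integral_mu2 nn_integral_lborel_prod_fst)
  finally show ?thesis .
qed

lemma nn_integral_plan_pr23:
  fixes H :: "real \<times> real \<Rightarrow> ennreal"
  assumes [measurable]: "H \<in> borel_measurable borel"
  shows "(\<integral>\<^sup>+p. H (pr23 p) \<partial>plan) = (\<integral>\<^sup>+q. H q \<partial>mu2)"
proof -
  have "(\<integral>\<^sup>+p. H (pr23 p) \<partial>plan) = (\<integral>\<^sup>+b. \<integral>\<^sup>+a. (\<Sum>k<3. ennreal (1/3) *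
      H (b, (real k + int_gap a b) / 3)) * indicator unit_sq (a, b) \<partial>lborel \<partial>lborel)"
    by (simp add: nn_integral_plan pr_apply nn_integral_lborel_prod_snd)
  also have "\<dots> = (\<integral>\<^sup>+b. \<integral>\<^sup>+a. (\<Sum>k<3. ennreal (1/3) *
      H (b, (real k + int_gap b a) / 3)) * indicator unit_sq (b, a) \<partial>lborel \<partial>lborel)"
    by (simp add: int_gap_commute unit_sq_def indicator_def conj_commute conj_left_commute)
  also have "\<dots> = (\<integral>\<^sup>+b. \<integral>\<^sup>+y. H (b, y) * indicator unit_sq (b, y) \<partial>lborel \<partial>lborel)"
    by (intro nn_integral_cong nn_integral_int_gap_thirds) measurable
  also have "\<dots> = (\<integral>\<^sup>+q. H q \<partial>mu2)"
    by (simp add: nn_integral_mu2 nn_integral_lborel_prod_fst)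
  finally show ?thesis .
qed

lemma distr_plan_eq_mu2I:
  assumes pr: "pr \<in> plan \<rightarrow>\<^sub>M mu2"
    and nn_integral_pr: "\<And>H. H \<in> borel_measurable borel \<Longrightarrow> (\<integral>\<^sup>+p. H (pr p) \<partial>plan) = (\<integral>\<^sup>+q. H q \<partial>mu2)"
  shows "distr plan mu2 pr = mu2"
proof (rule measure_eqI)
  fix Y assume "Y \<in> sets (distr plan mu2 pr)"
  then have Y: "Y \<in> sets mu2" by simp
  then have [measurable]: "Y \<in> sets borel"
    unfolding sets_mu2 by (auto simp: sets_restrict_space_iff)
  have "emeasure (distr plan mu2 pr) Y = (\<integral>\<^sup>+q. indicator Y q \<partial>distr plan mu2 pr)"
    using Y by simp
  also have "\<dots> = (\<integral>\<^sup>+p. indicator Y (pr p) \<partial>plan)"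
    using Y by (intro nn_integral_distr pr) simp
  also have "\<dots> = emeasure mu2 Y"
    using Y by (simp add: nn_integral_pr)
  finally show "emeasure (distr plan mu2 pr) Y = emeasure mu2 Y" .
qed simp

lemma distr_plan_pr12: "distr plan mu2 pr12 = mu2"
proof -
  interpret U: prob_space "uniform_count_measure {..<3::nat}"
    by (simp add: prob_space_uniform_lessThan)
  have "distr plan mu2 pr12 = distr (mu2 \<Otimes>\<^sub>M uniform_count_measure {..<3}) mu2 (pr12 \<circ> lift)"
    unfolding plan_def
    by (rule distr_distr) (use measurable_pr_cube(1)[OF sets_plan] measurable_lift in \<open>simp_all add: plan_def\<close>)
  also have "\<dots> = distr (mu2 \<Otimes>\<^sub>M uniform_count_measure {..<3::nat}) mu2 fst"
    by (rule distr_cong) (auto simp: lift_def pr_apply)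
  also have "\<dots> = mu2"
    by (rule U.distr_pair_fst)
  finally show ?thesis .
qed

lemma coupling_plan: "coupling plan"
  unfolding coupling_def
  using prob_space_plan sets_plan distr_plan_pr12
    distr_plan_eq_mu2I[OF measurable_pr_cube(2)[OF sets_plan] nn_integral_plan_pr13]
    distr_plan_eq_mu2I[OF measurable_pr_cube(3)[OF sets_plan] nn_integral_plan_pr23]
  by blast

lemma AE_plan_Ints: "AE p in plan. (case p of (x1, x2, x3) \<Rightarrow> x1 + x2 + 3 * x3 \<in> \<int>)"
  unfolding plan_def
proof (subst AE_distr_iff[OF measurable_lift])
  have "{p \<in> unit_cube. (case p of (x1, x2, x3) \<Rightarrow> x1 + x2 + 3 * x3 \<in> \<int>)} \<in> sets borel"
    by measurable
  then show "{p \<in> space (restrict_space borel unit_cube). (case p of (x1, x2, x3) \<Rightarrow> x1 + x2 + 3 * x3 \<in> \<int>)}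
      \<in> sets (restrict_space borel unit_cube)"
    by (simp add: sets_restrict_space_iff space_restrict_space)
  show "AE q in mu2 \<Otimes>\<^sub>M uniform_count_measure {..<3}.
      (case lift q of (x1, x2, x3) \<Rightarrow> x1 + x2 + 3 * x3 \<in> \<int>)"
  proof (rule AE_I2)
    fix q :: "(real \<times> real) \<times> nat"
    have "(case lift q of (x1, x2, x3) \<Rightarrow> x1 + x2 + 3 * x3)
        = real (snd q) + (fst (fst q) + snd (fst q) + int_gap (fst (fst q)) (snd (fst q)))"
      by (simp add: lift_def)
    then show "(case lift q of (x1, x2, x3) \<Rightarrow> x1 + x2 + 3 * x3 \<in> \<int>)"
      by (simp add: add_int_gap split: prod.splits)
  qed
qed

lemma AE_plan_pr12_nonzero: "AE p in plan. pr12 p \<noteq> (0, 0)"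
proof (rule AE_distrD[OF measurable_pr_cube(1)[OF sets_plan]])
  have "AE q in mu2. q \<noteq> (0, 0)"
    unfolding mu2_def
    by (subst AE_restrict_space_iff) (auto intro: AE_mp[OF AE_lborel_singleton[of "(0, 0)"]])
  then show "AE q in distr plan mu2 pr12. q \<noteq> (0, 0)"
    unfolding distr_plan_pr12 .
qed

section \<open>Complementary slackness\<close>

lemma dual_feasible:
  "\<forall>x1\<in>{0..1}. \<forall>x2\<in>{0..1}. \<forall>x3\<in>{0..1}. f12 x1 x2 + f13 x1 x3 + f23 x2 x3 \<le> cost (x1, x2, x3)"
  by (auto simp: f12_def f13_def f23_def cost_def)

text \<open>The point (0, 0, 2/3) shows that (x1, x2) = (0, 0) must be excluded: there the dual sum
  is -1 while the cost is 0.\<close>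

lemma dual_tight_on_support:
  assumes "x1 \<in> {0..1}" "x2 \<in> {0..1}" "x3 \<in> {0..1}"
    and "x1 + x2 + 3 * x3 \<in> \<int>" and "(x1, x2) \<noteq> (0, 0)"
  shows "cost (x1, x2, x3) = f12 x1 x2 + f13 x1 x3 + f23 x2 x3"
proof -
  obtain n :: int where n: "x1 + x2 + 3 * x3 = n"
    using assms(4) by (auto elim: Ints_cases)
  have "0 < x1 + x2"
    using assms(1,2,5) by auto
  show ?thesis
  proof (cases "x3 < 2/3")
    case True
    with n assms(1,2) have "real_of_int n < 4" by auto
    then have "n \<le> 3" by linarith
    with True n show ?thesis by (simp add: cost_def f12_def f13_def f23_def)
  next
    case False
    with n assms(3) \<open>0 < x1 + x2\<close> have "2 < real_of_int n" by auto
    then have "3 \<le> n" by linarith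
    with False n show ?thesis by (simp add: cost_def f12_def f13_def f23_def)
  qed
qed

lemma borel_measurable_dual [measurable]:
  "(\<lambda>(x, y). f12 x y) \<in> borel_measurable borel" "(\<lambda>(x, y). f13 x y) \<in> borel_measurable borel"
  "(\<lambda>(x, y). f23 x y) \<in> borel_measurable borel"
  unfolding f12_def f13_def f23_def by measurable

lemma integrable_mu2L_bounded:
  fixes f :: "real \<times> real \<Rightarrow> real"
  assumes [measurable]: "f \<in> borel_measurable borel" and bounded: "\<And>q. q \<in> unit_sq \<Longrightarrow> \<bar>f q\<bar> \<le> B"
  shows "integrable mu2L f"
proof -
  interpret prob_space mu2 by (rule prob_space_mu2)
  have "integrable mu2 f"
    by (rule integrable_const_bound[where B=B])
      (auto intro!: AE_I2 bounded simp: space_mu2 mu2_def measurable_restrict_space1)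
  then show ?thesis
    unfolding mu2_def mu2L_def by (intro integrable_lebesgue_on_borel) auto
qed

lemma integrable_dual:
  "integrable mu2L (\<lambda>(x, y). f12 x y)" "integrable mu2L (\<lambda>(x, y). f13 x y)"
  "integrable mu2L (\<lambda>(x, y). f23 x y)"
  by (intro integrable_mu2L_bounded[where B=2] borel_measurable_dual;
      force simp: unit_sq_def f12_def f13_def f23_def)+

lemma integral_cost_plan:
  "(\<integral>p. cost p \<partial>plan) = (\<integral>p. f12 (fst p) (snd p) \<partial>mu2L) + (\<integral>p. f13 (fst p) (snd p) \<partial>mu2L)
    + (\<integral>p. f23 (fst p) (snd p) \<partial>mu2L)"
proof -
  obtain H where H: "integrable plan H"
    "AE p in plan. H p = f12 (fst p) (fst (snd p)) + f13 (fst p) (snd (snd p)) + f23 (fst (snd p)) (snd (snd p))"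
    "(\<integral>p. H p \<partial>plan) = (\<integral>p. f12 (fst p) (snd p) \<partial>mu2L) + (\<integral>p. f13 (fst p) (snd p) \<partial>mu2L)
       + (\<integral>p. f23 (fst p) (snd p) \<partial>mu2L)"
    using coupling_dual_objective[OF coupling_plan integrable_dual] by blast
  have "AE p in plan. cost p = H p"
    using H(2) AE_plan_Ints AE_plan_pr12_nonzero AE_space
  proof eventually_elim
    case (elim p)
    obtain x1 x2 x3 where p: "p = (x1, x2, x3)" by (cases p)
    from elim show ?case
      using dual_tight_on_support[of x1 x2 x3] by (simp add: p space_plan unit_cube_def pr12_def)
  qed
  then have "(\<integral>p. cost p \<partial>plan) = (\<integral>p. H p \<partial>plan)"
    using coupling_integrable_cost[OF coupling_plan] H(1)
    by (intro integral_cong_AE borel_measurable_integrable)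
  then show ?thesis unfolding H(3) .
qed

lemma dual_optimal:
  fixes g12 g13 g23 :: "real \<Rightarrow> real \<Rightarrow> real"
  assumes "integrable mu2L (\<lambda>(x, y). g12 x y)" "integrable mu2L (\<lambda>(x, y). g13 x y)"
    "integrable mu2L (\<lambda>(x, y). g23 x y)"
    and "\<forall>x1\<in>{0..1}. \<forall>x2\<in>{0..1}. \<forall>x3\<in>{0..1}. g12 x1 x2 + g13 x1 x3 + g23 x2 x3 \<le> cost (x1, x2, x3)"
  shows "(\<integral>p. g12 (fst p) (snd p) \<partial>mu2L) + (\<integral>p. g13 (fst p) (snd p) \<partial>mu2L)
      + (\<integral>p. g23 (fst p) (snd p) \<partial>mu2L) \<le> (\<integral>p. f12 (fst p) (snd p) \<partial>mu2L)
      + (\<integral>p. f13 (fst p) (snd p) \<partial>mu2L) + (\<integral>p. f23 (fst p) (snd p) \<partial>mu2L)"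
  using weak_duality[OF coupling_plan assms] unfolding integral_cost_plan .

lemma plan_optimal: "coupling \<pi> \<Longrightarrow> (\<integral>p. cost p \<partial>plan) \<le> (\<integral>p. cost p \<partial>\<pi>)"
  using weak_duality[OF _ integrable_dual dual_feasible] unfolding integral_cost_plan .

theorem mainTheorem19:
  shows "(\<forall>x1\<in>{0..1}. \<forall>x2\<in>{0..1}. \<forall>x3\<in>{0..1}.
            f12 x1 x2 + f13 x1 x3 + f23 x2 x3 \<le> cost (x1, x2, x3))
    \<and> integrable mu2L (\<lambda>(x, y). f12 x y)
    \<and> integrable mu2L (\<lambda>(x, y). f13 x y)
    \<and> integrable mu2L (\<lambda>(x, y). f23 x y)
    \<and> (\<forall>g12 g13 g23 :: real \<Rightarrow> real \<Rightarrow> real.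
          integrable mu2L (\<lambda>(x, y). g12 x y) \<and> integrable mu2L (\<lambda>(x, y). g13 x y)
          \<and> integrable mu2L (\<lambda>(x, y). g23 x y)
          \<and> (\<forall>x1\<in>{0..1}. \<forall>x2\<in>{0..1}. \<forall>x3\<in>{0..1}.
                g12 x1 x2 + g13 x1 x3 + g23 x2 x3 \<le> cost (x1, x2, x3))
          \<longrightarrow> (\<integral>p. g12 (fst p) (snd p) \<partial>mu2L) + (\<integral>p. g13 (fst p) (snd p) \<partial>mu2L)
                + (\<integral>p. g23 (fst p) (snd p) \<partial>mu2L)
              \<le> (\<integral>p. f12 (fst p) (snd p) \<partial>mu2L) + (\<integral>p. f13 (fst p) (snd p) \<partial>mu2L)
                + (\<integral>p. f23 (fst p) (snd p) \<partial>mu2L))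
    \<and> (\<exists>\<pi>. coupling \<pi>
          \<and> (AE p in \<pi>. (case p of (x1, x2, x3) \<Rightarrow> x1 + x2 + 3 * x3 \<in> \<int>))
          \<and> (\<forall>\<pi>'. coupling \<pi>' \<longrightarrow> (\<integral>p. cost p \<partial>\<pi>) \<le> (\<integral>p. cost p \<partial>\<pi>')))"
  by (intro conjI allI impI exI[of _ plan] dual_feasible integrable_dual coupling_plan AE_plan_Ints
      plan_optimal dual_optimal; (elim conjE)?; assumption)

end
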